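(* Let $c$ be the ellipse $x^2/a_c^2+y^2/b_c^2=1$ with $a_c>b_c>0$, linear eccentricity $d=\sqrt{a_c^2-b_c^2}$ and numerical eccentricity $m=d/a_c$, and let $\mathrm{sn},\mathrm{cn},\mathrm{dn}$ denote the Jacobian elliptic functions with modulus $m$ and $K$ the complete elliptic integral of the first kind with modulus $m$. \begin{enumerate} \item For every ellipse $e$ with semiaxes $(a_e,b_e)$ confocal with $c$ and exterior to it, the billiards in $e$ with caustic $c$ are canonically parametrized by $\tilde u\mapsto(-a_e\,\mathrm{sn}\,\tilde u,\ b_e\,\mathrm{cn}\,\tilde u)$ in the following sense: if $\Delta\tilde u$ satisfies $b_c=b_e\,\mathrm{cn}(\Delta\tilde u)$, then for any initial value $\tilde u_0$ the vertices of the billiard in $e$ with caustic $c$ starting at the point with parameter $\tilde u_0$ have the parameters $\tilde u_0+2k\Delta\tilde u$, $k\in\mathbb Z$. \item Conversely, let $N\ge 3$ and $\tau\ge1$ be integers with $\gcd(N,\tau)=1$ and $2\tau<N$, and put $\Delta\tilde u=\frac{2\tau K}{N}$. If \[a_e=\frac{a_c\,\mathrm{dn}(\Delta\tilde u)}{\mathrm{cn}(\Delta\tilde u)},\qquad b_e=\frac{b_c}{\mathrm{cn}(\Delta\tilde u)},\] then the ellipse $e$ with semiaxes $(a_e,b_e)$ is confocal with $c$ and the billiards in $e$ with caustic $c$ are $N$-periodic with turning number $\tau$. \end{enumerate}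
   Context: Confocal conics of $c$: $\frac{x^2}{a_c^2+k}+\frac{y^2}{b_c^2+k}=1$. An ellipse $e$ confocal with $c$ and exterior to it has semiaxes $a_e^2=a_c^2+k_e$, $b_e^2=b_c^2+k_e$ with $k_e>0$. A billiard in $e$ with caustic $c$ is a sequence of points $P_1,P_2,\dots$ on $e$ such that each line $P_iP_{i+1}$ is tangent to $c$ and $P_{i-1}P_i$, $P_iP_{i+1}$ are the two tangents from $P_i$ to $c$; it is traversed counterclockwise. It is $N$-periodic if $P_{i+N}=P_i$ for all $i$; its turning number $\tau$ is the number of times one period of the billiard winds around the center of $e$. The modulus convention: $\tilde u=\int_0^{\varphi}\frac{d\psi}{\sqrt{1-m^2\sin^2\psi}}$, $\mathrm{sn}\,\tilde u=\sin\varphi$, $\mathrm{cn}\,\tilde u=\cos\varphi$, $\mathrm{dn}\,\tilde u=\sqrt{1-m^2\mathrm{sn}^2\tilde u}$, $K=\int_0^{\pi/2}\frac{d\psi}{\sqrt{1-m^2\sin^2\psi}}$. *)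

theory Defs
  imports "HOL-Analysis.Analysis"
begin

definition ellF :: "real \<Rightarrow> real \<Rightarrow> real" where
  "ellF m \<phi> =
     (if 0 \<le> \<phi> then integral {0..\<phi>} (\<lambda>\<psi>. 1 / sqrt (1 - m\<^sup>2 * (sin \<psi>)\<^sup>2))
      else - integral {\<phi>..0} (\<lambda>\<psi>. 1 / sqrt (1 - m\<^sup>2 * (sin \<psi>)\<^sup>2)))"

definition jam :: "real \<Rightarrow> real \<Rightarrow> real" where
  "jam m u = (THE \<phi>. ellF m \<phi> = u)"

definition jsn :: "real \<Rightarrow> real \<Rightarrow> real" where "jsn m u = sin (jam m u)"
definition jcn :: "real \<Rightarrow> real \<Rightarrow> real" where "jcn m u = cos (jam m u)"
definition jdn :: "real \<Rightarrow> real \<Rightarrow> real" where "jdn m u = sqrt (1 - m\<^sup>2 * (jsn m u)\<^sup>2)"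

definition ellK :: "real \<Rightarrow> real" where "ellK m = ellF m (pi / 2)"

definition ellipse :: "real \<Rightarrow> real \<Rightarrow> complex set" where
  "ellipse a b = {z. (Re z / a)\<^sup>2 + (Im z / b)\<^sup>2 = 1}"

definition line_through :: "complex \<Rightarrow> complex \<Rightarrow> complex set" where
  "line_through p q = {p + of_real t * (q - p) | t. True}"

text \<open>A line is tangent to the (convex) ellipse iff it meets it in exactly one point.\<close>
definition tangent_to :: "complex set \<Rightarrow> real \<Rightarrow> real \<Rightarrow> bool" where
  "tangent_to L a b \<longleftrightarrow> (\<exists>!z. z \<in> L \<and> z \<in> ellipse a b)"

text \<open>Billiard in the ellipse e (semiaxes ae, be) with caustic c (semiaxes ac, bc),
  traversed counterclockwise, indexed by the integers.\<close>
definition billiard :: "real \<Rightarrow> real \<Rightarrow> real \<Rightarrow> real \<Rightarrow> (int \<Rightarrow> complex) \<Rightarrow> bool" where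
  "billiard ae be ac bc P \<longleftrightarrow>
     (\<forall>i. P i \<in> ellipse ae be) \<and>
     (\<forall>i. P i \<noteq> P (i + 1)) \<and>
     (\<forall>i. tangent_to (line_through (P i) (P (i + 1))) ac bc) \<and>
     (\<forall>i. line_through (P (i - 1)) (P i) \<noteq> line_through (P i) (P (i + 1))) \<and>
     (\<forall>i. Re (P i) * Im (P (i + 1)) - Im (P i) * Re (P (i + 1)) > 0)"

definition periodic_billiard :: "(int \<Rightarrow> complex) \<Rightarrow> nat \<Rightarrow> bool" where
  "periodic_billiard P N \<longleftrightarrow> (\<forall>i. P (i + int N) = P i)"

definition turning_number :: "(int \<Rightarrow> complex) \<Rightarrow> nat \<Rightarrow> real" where
  "turning_number P N = (\<Sum>i\<in>{0..<int N}. Arg (P (i + 1) / P i)) / (2 * pi)"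

definition bparam :: "real \<Rightarrow> real \<Rightarrow> real \<Rightarrow> real \<Rightarrow> complex" where
  "bparam ae be m u = Complex (- ae * jsn m u) (be * jcn m u)"

definition confocal_exterior :: "real \<Rightarrow> real \<Rightarrow> real \<Rightarrow> real \<Rightarrow> bool" where
  "confocal_exterior ae be ac bc \<longleftrightarrow> ae > 0 \<and> be > 0 \<and>
     (\<exists>k>0. ae\<^sup>2 = ac\<^sup>2 + k \<and> be\<^sup>2 = bc\<^sup>2 + k)"

end

theory Submission
  imports Defs
begin

text \<open>Through the amplitude \<phi> = am u the Jacobi parametrisation becomes the angular one
  \<phi> \<mapsto> (-ae sin \<phi>, be cos \<phi>). By the addition theorems for sn and cn, the chord joining the
  parameters u - \<Delta> and u + \<Delta> lies on a line whose tangency to c amounts to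
  ac dn \<Delta> = ae cn \<Delta>; for confocal e this is bc = be cn \<Delta>, independently of u. As a point
  outside c has only two tangents to c and the orientation selects one of them, every billiard
  is the orbit u0 + 2 k \<Delta>. Since am (u + 2K) = am u + pi, the step \<Delta> = 2 \<tau> K / N closes the
  orbit after N steps with total amplitude increase 2 \<tau> pi; as the argument of each vertex
  stays within pi/2 of its amplitude plus pi/2, the turning number is \<tau>.\<close>

section \<open>Jacobi elliptic functions\<close>

definition ellF_integrand :: "real \<Rightarrow> real \<Rightarrow> real" where
  "ellF_integrand m \<psi> = 1 / sqrt (1 - m\<^sup>2 * (sin \<psi>)\<^sup>2)"

lemma modulus_radicand_pos:
  fixes m a :: real
  assumes "m\<^sup>2 < 1" and "a\<^sup>2 \<le> 1"
  shows "0 < 1 - m\<^sup>2 * a\<^sup>2"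
proof -
  have "m\<^sup>2 * a\<^sup>2 \<le> m\<^sup>2"
    using assms(2) by (simp add: mult_left_le)
  then show ?thesis
    using assms(1) by linarith
qed

lemma sin_sq_le_one: "(sin (x::real))\<^sup>2 \<le> 1"
  using abs_sin_le_one[of x] abs_square_le_1 by blast

lemma ellF_integrand_pos: "m\<^sup>2 < 1 \<Longrightarrow> 0 < ellF_integrand m x"
  using modulus_radicand_pos[OF _ sin_sq_le_one] by (simp add: ellF_integrand_def)

lemma ellF_integrand_ge_1:
  assumes "m\<^sup>2 < 1"
  shows "1 \<le> ellF_integrand m x"
proof -
  have "0 < sqrt (1 - m\<^sup>2 * (sin x)\<^sup>2)" "sqrt (1 - m\<^sup>2 * (sin x)\<^sup>2) \<le> 1"
    using modulus_radicand_pos[OF assms sin_sq_le_one] by simp_all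
  then show ?thesis
    by (simp add: ellF_integrand_def)
qed

lemma continuous_on_ellF_integrand:
  assumes m: "m\<^sup>2 < 1"
  shows "continuous_on S (ellF_integrand m)"
proof -
  have "sqrt (1 - m\<^sup>2 * (sin x)\<^sup>2) \<noteq> 0" for x
    using modulus_radicand_pos[OF m sin_sq_le_one, of x] by simp
  then show ?thesis
    unfolding ellF_integrand_def by (intro continuous_intros) auto
qed

lemma ellF_eq_integral_diff:
  assumes m: "m\<^sup>2 < 1" and "a \<le> 0" "a \<le> x"
  shows "ellF m x = integral {a..x} (ellF_integrand m) - integral {a..0} (ellF_integrand m)"
proof -
  have int: "ellF_integrand m integrable_on {a..b}" for b
    by (rule integrable_continuous_real) (rule continuous_on_ellF_integrand[OF m])
  show ?thesis
  proof (cases "0 \<le> x")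
    case True
    then show ?thesis
      using Henstock_Kurzweil_Integration.integral_combine[OF \<open>a \<le> 0\<close> True int]
      unfolding ellF_def ellF_integrand_def[abs_def] by simp
  next
    case False
    then show ?thesis
      using Henstock_Kurzweil_Integration.integral_combine[OF \<open>a \<le> x\<close> _ int, of 0]
      unfolding ellF_def ellF_integrand_def[abs_def] by simp
  qed
qed

lemma has_real_derivative_ellF:
  assumes m: "m\<^sup>2 < 1"
  shows "(ellF m has_real_derivative ellF_integrand m x) (at x)"
proof -
  define a where "a = min 0 x - 1"
  have "((\<lambda>y. integral {a..y} (ellF_integrand m)) has_real_derivative ellF_integrand m x)
      (at x within {a..x+1})"
    by (rule integral_has_real_derivative)
       (use m in \<open>auto intro: continuous_on_ellF_integrand simp: a_def\<close>)
  moreover have "at x within {a..x+1} = at x"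
    by (rule at_within_interior) (simp add: a_def)
  ultimately have "((\<lambda>y. integral {a..y} (ellF_integrand m) - integral {a..0} (ellF_integrand m))
      has_real_derivative ellF_integrand m x) (at x)"
    by (auto intro!: derivative_eq_intros)
  then show ?thesis
    by (rule has_field_derivative_transform_within_open[of _ _ _ "{a<..}"])
       (use m in \<open>auto simp: a_def intro!: ellF_eq_integral_diff[symmetric]\<close>)
qed

lemma ellF_has_real_derivative [derivative_intros]:
  "m\<^sup>2 < 1 \<Longrightarrow> (f has_real_derivative f') (at x within s) \<Longrightarrow>
    ((\<lambda>y. ellF m (f y)) has_real_derivative ellF_integrand m (f x) * f') (at x within s)"
  using DERIV_chain2[OF has_real_derivative_ellF] by blast

lemma ellF_0 [simp]: "ellF m 0 = 0"
  by (simp add: ellF_def)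

lemma isCont_ellF: "m\<^sup>2 < 1 \<Longrightarrow> isCont (ellF m) x"
  using has_real_derivative_ellF DERIV_isCont by blast

lemma ellF_strict_mono:
  assumes m: "m\<^sup>2 < 1"
  shows "strict_mono (ellF m)"
proof (rule strict_monoI)
  fix x y :: real
  assume "x < y"
  then show "ellF m x < ellF m y"
    using DERIV_pos_imp_increasing has_real_derivative_ellF[OF m] ellF_integrand_pos[OF m]
    by blast
qed

lemma ellF_less_iff: "m\<^sup>2 < 1 \<Longrightarrow> ellF m x < ellF m y \<longleftrightarrow> x < y"
  using ellF_strict_mono strict_mono_less by blast

lemma ellF_eq_iff: "m\<^sup>2 < 1 \<Longrightarrow> ellF m x = ellF m y \<longleftrightarrow> x = y"
  using ellF_strict_mono strict_mono_eq by blast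

lemma ellF_minus_mono:
  assumes "m\<^sup>2 < 1" "x \<le> y"
  shows "ellF m x - x \<le> ellF m y - y"
  by (rule DERIV_nonneg_imp_nondecreasing[OF assms(2)])
     (use assms(1) ellF_integrand_ge_1 in \<open>auto intro!: derivative_eq_intros\<close>)

lemma ellF_surj:
  assumes m: "m\<^sup>2 < 1"
  shows "\<exists>x. ellF m x = u"
proof (cases "0 \<le> u")
  case True
  then show ?thesis
    using IVT[of "ellF m" 0 u u] ellF_minus_mono[OF m, of 0 u] isCont_ellF[OF m] by auto
next
  case False
  then show ?thesis
    using IVT[of "ellF m" u u 0] ellF_minus_mono[OF m, of u 0] isCont_ellF[OF m] by auto
qed

lemma jam_eqI:
  assumes m: "m\<^sup>2 < 1" and "ellF m x = u"
  shows "jam m u = x"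
  unfolding jam_def using assms ellF_eq_iff[OF m] by (intro the_equality) auto

lemma ellF_jam:
  assumes m: "m\<^sup>2 < 1"
  shows "ellF m (jam m u) = u"
proof -
  obtain x where "ellF m x = u"
    using ellF_surj[OF m] by blast
  with jam_eqI[OF m this] show ?thesis
    by simp
qed

lemma jam_ellF: "m\<^sup>2 < 1 \<Longrightarrow> jam m (ellF m x) = x"
  by (rule jam_eqI) auto

lemma ellF_add_pi:
  assumes m: "m\<^sup>2 < 1"
  shows "ellF m (x + pi) = ellF m x + ellF m pi"
proof -
  have "ellF m (x + pi) - ellF m x = ellF m (0 + pi) - ellF m 0"
    by (rule DERIV_isconst_all)
       (use m in \<open>auto intro!: derivative_eq_intros simp: ellF_integrand_def\<close>)
  then show ?thesis
    by simp
qed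

lemma ellF_minus:
  assumes m: "m\<^sup>2 < 1"
  shows "ellF m (- x) = - ellF m x"
proof -
  have "ellF m (- x) + ellF m x = ellF m (- 0) + ellF m 0"
    by (rule DERIV_isconst_all)
       (use m in \<open>auto intro!: derivative_eq_intros simp: ellF_integrand_def\<close>)
  then show ?thesis
    by simp
qed

lemma ellF_pi:
  assumes m: "m\<^sup>2 < 1"
  shows "ellF m pi = 2 * ellK m"
proof -
  have "ellF m (pi - x) + ellF m x = ellF m (pi - 0) + ellF m 0" for x
    by (rule DERIV_isconst_all)
       (use m in \<open>auto intro!: derivative_eq_intros simp: ellF_integrand_def\<close>)
  from this[of "pi / 2"] show ?thesis
    by (simp add: ellK_def)
qed

lemma ellK_pos:
  assumes m: "m\<^sup>2 < 1"
  shows "0 < ellK m"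
proof -
  have "pi / 2 \<le> ellK m"
    using ellF_minus_mono[OF m, of 0 "pi / 2"] unfolding ellK_def by simp
  then show ?thesis
    using pi_gt_zero by linarith
qed

lemma jam_0 [simp]: "m\<^sup>2 < 1 \<Longrightarrow> jam m 0 = 0"
  by (rule jam_eqI) simp_all

lemma jam_ellK: "m\<^sup>2 < 1 \<Longrightarrow> jam m (ellK m) = pi / 2"
  by (rule jam_eqI) (simp_all add: ellK_def)

lemma jam_add_2K: "m\<^sup>2 < 1 \<Longrightarrow> jam m (u + 2 * ellK m) = jam m u + pi"
  by (rule jam_eqI) (simp_all add: ellF_add_pi ellF_pi ellF_jam)

lemma jam_add_2K_mult:
  assumes m: "m\<^sup>2 < 1"
  shows "jam m (u + 2 * ellK m * real n) = jam m u + pi * real n"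
proof (induction n)
  case (Suc n)
  have "jam m (u + 2 * ellK m * real (Suc n)) = jam m ((u + 2 * ellK m * real n) + 2 * ellK m)"
    by (simp add: algebra_simps)
  also have "\<dots> = jam m (u + 2 * ellK m * real n) + pi"
    by (rule jam_add_2K[OF m])
  also have "\<dots> = jam m u + pi * real (Suc n)"
    using Suc by (simp add: algebra_simps)
  finally show ?case .
qed simp

lemma jam_minus: "m\<^sup>2 < 1 \<Longrightarrow> jam m (- u) = - jam m u"
  by (rule jam_eqI) (simp_all add: ellF_minus ellF_jam)

lemma jam_less_iff: "m\<^sup>2 < 1 \<Longrightarrow> jam m u < jam m v \<longleftrightarrow> u < v"
  using ellF_less_iff[of m "jam m u" "jam m v"] by (simp add: ellF_jam)

lemma isCont_jam:
  assumes m: "m\<^sup>2 < 1"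
  shows "isCont (jam m) u"
proof -
  have "isCont (jam m) (ellF m (jam m u))"
    by (rule isCont_inverse_function[where d = 1])
       (auto simp: jam_ellF[OF m] isCont_ellF[OF m])
  then show ?thesis
    by (simp add: ellF_jam[OF m])
qed

lemma jdn_eq_inverse_integrand: "jdn m u = 1 / ellF_integrand m (jam m u)"
  by (simp add: jdn_def ellF_integrand_def jsn_def)

lemma has_real_derivative_jam:
  assumes m: "m\<^sup>2 < 1"
  shows "(jam m has_real_derivative jdn m u) (at u)"
proof -
  have "(jam m has_real_derivative inverse (ellF_integrand m (jam m u))) (at u)"
    by (rule DERIV_inverse_function[where a = "u - 1" and b = "u + 1" and f = "ellF m"])
       (use ellF_integrand_pos[OF m] in
         \<open>auto simp: has_real_derivative_ellF[OF m] ellF_jam[OF m] isCont_jam[OF m]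
            less_imp_neq[symmetric]\<close>)
  then show ?thesis
    by (simp add: jdn_eq_inverse_integrand divide_inverse)
qed

lemma jam_has_real_derivative [derivative_intros]:
  "m\<^sup>2 < 1 \<Longrightarrow> (f has_real_derivative f') (at x within s) \<Longrightarrow>
    ((\<lambda>y. jam m (f y)) has_real_derivative jdn m (f x) * f') (at x within s)"
  using DERIV_chain2[OF has_real_derivative_jam] by blast

lemma jsn_sq_le_one: "(jsn m u)\<^sup>2 \<le> 1"
  by (simp add: jsn_def sin_sq_le_one)

lemma jsn_sq_add_jcn_sq: "(jsn m u)\<^sup>2 + (jcn m u)\<^sup>2 = 1"
  by (simp add: jsn_def jcn_def)

lemma jdn_pos: "m\<^sup>2 < 1 \<Longrightarrow> 0 < jdn m u"
  using modulus_radicand_pos[OF _ jsn_sq_le_one] by (simp add: jdn_def)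

lemma jdn_sq: "m\<^sup>2 < 1 \<Longrightarrow> (jdn m u)\<^sup>2 = 1 - m\<^sup>2 * (jsn m u)\<^sup>2"
  using modulus_radicand_pos[OF _ jsn_sq_le_one] by (simp add: jdn_def less_imp_le)

lemma jsn_has_real_derivative [derivative_intros]:
  "m\<^sup>2 < 1 \<Longrightarrow> (f has_real_derivative f') (at x within s) \<Longrightarrow>
    ((\<lambda>y. jsn m (f y)) has_real_derivative jcn m (f x) * jdn m (f x) * f') (at x within s)"
  unfolding jsn_def jcn_def by (auto intro!: derivative_eq_intros)

lemma jcn_has_real_derivative [derivative_intros]:
  "m\<^sup>2 < 1 \<Longrightarrow> (f has_real_derivative f') (at x within s) \<Longrightarrow>
    ((\<lambda>y. jcn m (f y)) has_real_derivative - jsn m (f x) * jdn m (f x) * f') (at x within s)"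
  unfolding jsn_def jcn_def by (auto intro!: derivative_eq_intros)

lemma jdn_has_real_derivative [derivative_intros]:
  assumes m: "m\<^sup>2 < 1" and f: "(f has_real_derivative f') (at x within s)"
  shows "((\<lambda>y. jdn m (f y)) has_real_derivative - m\<^sup>2 * jsn m (f x) * jcn m (f x) * f')
    (at x within s)"
proof -
  have "0 < 1 - m\<^sup>2 * (jsn m (f x))\<^sup>2"
    using modulus_radicand_pos[OF m jsn_sq_le_one] .
  then have "((\<lambda>y. sqrt (1 - m\<^sup>2 * (jsn m (f y))\<^sup>2)) has_real_derivative
      - (m\<^sup>2 * (2 * jsn m (f x) * (jcn m (f x) * jdn m (f x) * f')))
        / (2 * sqrt (1 - m\<^sup>2 * (jsn m (f x))\<^sup>2))) (at x within s)"
    using m f by (auto intro!: derivative_eq_intros simp: divide_simps)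
  then show ?thesis
    using jdn_pos[OF m, of "f x"] unfolding jdn_def[symmetric] by (simp add: field_simps)
qed

lemma jsn_0 [simp]: "m\<^sup>2 < 1 \<Longrightarrow> jsn m 0 = 0"
  by (simp add: jsn_def)

lemma jcn_0 [simp]: "m\<^sup>2 < 1 \<Longrightarrow> jcn m 0 = 1"
  by (simp add: jcn_def)

lemma jdn_0 [simp]: "m\<^sup>2 < 1 \<Longrightarrow> jdn m 0 = 1"
  by (simp add: jdn_def)

lemma jsn_minus: "m\<^sup>2 < 1 \<Longrightarrow> jsn m (- u) = - jsn m u"
  by (simp add: jsn_def jam_minus)

lemma jcn_minus: "m\<^sup>2 < 1 \<Longrightarrow> jcn m (- u) = jcn m u"
  by (simp add: jcn_def jam_minus)

lemma jdn_minus: "m\<^sup>2 < 1 \<Longrightarrow> jdn m (- u) = jdn m u"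
  by (simp add: jdn_def jsn_minus)

lemma jacobi_denominator_pos: "m\<^sup>2 < 1 \<Longrightarrow> 0 < 1 - m\<^sup>2 * (jsn m u)\<^sup>2 * (jsn m v)\<^sup>2"
  using modulus_radicand_pos[of m "jsn m u * jsn m v"] jsn_sq_le_one[of m u] jsn_sq_le_one[of m v]
  by (simp add: power_mult_distrib mult_le_one mult.assoc)

lemma jacobi_denominator_has_real_derivative:
  assumes m: "m\<^sup>2 < 1"
  shows "((\<lambda>x. 1 - m\<^sup>2 * (jsn m x)\<^sup>2 * (jsn m (s - x))\<^sup>2) has_real_derivative
    - m\<^sup>2 * (2 * jsn m x * jcn m x * jdn m x * (jsn m (s - x))\<^sup>2
      - 2 * (jsn m x)\<^sup>2 * jsn m (s - x) * jcn m (s - x) * jdn m (s - x))) (at x)"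
  using m by (auto intro!: derivative_eq_intros simp: algebra_simps power2_eq_square)

text \<open>The addition theorems are proved by showing that, for fixed s, the right-hand sides
  evaluated at (x, s - x) do not depend on x.\<close>

lemma jsn_addition_invariant:
  assumes m: "m\<^sup>2 < 1"
  shows "((\<lambda>x. (jsn m x * jcn m (s - x) * jdn m (s - x) + jsn m (s - x) * jcn m x * jdn m x)
      / (1 - m\<^sup>2 * (jsn m x)\<^sup>2 * (jsn m (s - x))\<^sup>2)) has_real_derivative 0) (at x)"
proof -
  let ?s1 = "jsn m x" and ?c1 = "jcn m x" and ?d1 = "jdn m x"
  let ?s2 = "jsn m (s - x)" and ?c2 = "jcn m (s - x)" and ?d2 = "jdn m (s - x)"
  let ?num = "?s1 * ?c2 * ?d2 + ?s2 * ?c1 * ?d1"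
  let ?num' = "?c1 * ?d1 * ?c2 * ?d2 + ?s1 * ?s2 * ?d2\<^sup>2 + m\<^sup>2 * ?s1 * ?s2 * ?c2\<^sup>2
    - ?c2 * ?d2 * ?c1 * ?d1 - ?s2 * ?s1 * ?d1\<^sup>2 - m\<^sup>2 * ?s2 * ?s1 * ?c1\<^sup>2"
  let ?den = "1 - m\<^sup>2 * ?s1\<^sup>2 * ?s2\<^sup>2"
  let ?den' = "- m\<^sup>2 * (2 * ?s1 * ?c1 * ?d1 * ?s2\<^sup>2 - 2 * ?s1\<^sup>2 * ?s2 * ?c2 * ?d2)"
  have rel: "?c1\<^sup>2 = 1 - ?s1\<^sup>2" "?c2\<^sup>2 = 1 - ?s2\<^sup>2"
    "?d1\<^sup>2 = 1 - m\<^sup>2 * ?s1\<^sup>2" "?d2\<^sup>2 = 1 - m\<^sup>2 * ?s2\<^sup>2"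
    using jsn_sq_add_jcn_sq[of m x] jsn_sq_add_jcn_sq[of m "s - x"] jdn_sq[OF m]
    by (simp_all add: eq_diff_eq)
  have num: "((\<lambda>x. jsn m x * jcn m (s - x) * jdn m (s - x) + jsn m (s - x) * jcn m x * jdn m x)
      has_real_derivative ?num') (at x)"
    using m by (auto intro!: derivative_eq_intros simp: algebra_simps power2_eq_square)
  have "((\<lambda>x. (jsn m x * jcn m (s - x) * jdn m (s - x) + jsn m (s - x) * jcn m x * jdn m x)
      / (1 - m\<^sup>2 * (jsn m x)\<^sup>2 * (jsn m (s - x))\<^sup>2)) has_real_derivative
      (?num' * ?den - ?num * ?den') / (?den * ?den)) (at x)"
    by (rule DERIV_divide[OF num jacobi_denominator_has_real_derivative[OF m]])
       (use jacobi_denominator_pos[OF m, of x "s - x"] in simp)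
  moreover have "?num' * ?den - ?num * ?den' = 0"
    using rel by algebra
  ultimately show ?thesis
    by simp
qed

lemma jcn_addition_invariant:
  assumes m: "m\<^sup>2 < 1"
  shows "((\<lambda>x. (jcn m x * jcn m (s - x) - jsn m x * jsn m (s - x) * jdn m x * jdn m (s - x))
      / (1 - m\<^sup>2 * (jsn m x)\<^sup>2 * (jsn m (s - x))\<^sup>2)) has_real_derivative 0) (at x)"
proof -
  let ?s1 = "jsn m x" and ?c1 = "jcn m x" and ?d1 = "jdn m x"
  let ?s2 = "jsn m (s - x)" and ?c2 = "jcn m (s - x)" and ?d2 = "jdn m (s - x)"
  let ?num = "?c1 * ?c2 - ?s1 * ?s2 * ?d1 * ?d2"
  let ?num' = "- ?s1 * ?d1 * ?c2 + ?c1 * ?s2 * ?d2 - ?c1 * ?s2 * ?d1\<^sup>2 * ?d2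
    + ?s1 * ?c2 * ?d1 * ?d2\<^sup>2 + m\<^sup>2 * ?s1\<^sup>2 * ?s2 * ?c1 * ?d2 - m\<^sup>2 * ?s1 * ?s2\<^sup>2 * ?c2 * ?d1"
  let ?den = "1 - m\<^sup>2 * ?s1\<^sup>2 * ?s2\<^sup>2"
  let ?den' = "- m\<^sup>2 * (2 * ?s1 * ?c1 * ?d1 * ?s2\<^sup>2 - 2 * ?s1\<^sup>2 * ?s2 * ?c2 * ?d2)"
  have rel: "?c1\<^sup>2 = 1 - ?s1\<^sup>2" "?c2\<^sup>2 = 1 - ?s2\<^sup>2"
    "?d1\<^sup>2 = 1 - m\<^sup>2 * ?s1\<^sup>2" "?d2\<^sup>2 = 1 - m\<^sup>2 * ?s2\<^sup>2"
    using jsn_sq_add_jcn_sq[of m x] jsn_sq_add_jcn_sq[of m "s - x"] jdn_sq[OF m]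
    by (simp_all add: eq_diff_eq)
  have num: "((\<lambda>x. jcn m x * jcn m (s - x) - jsn m x * jsn m (s - x) * jdn m x * jdn m (s - x))
      has_real_derivative ?num') (at x)"
    using m by (auto intro!: derivative_eq_intros simp: algebra_simps power2_eq_square)
  have "((\<lambda>x. (jcn m x * jcn m (s - x) - jsn m x * jsn m (s - x) * jdn m x * jdn m (s - x))
      / (1 - m\<^sup>2 * (jsn m x)\<^sup>2 * (jsn m (s - x))\<^sup>2)) has_real_derivative
      (?num' * ?den - ?num * ?den') / (?den * ?den)) (at x)"
    by (rule DERIV_divide[OF num jacobi_denominator_has_real_derivative[OF m]])
       (use jacobi_denominator_pos[OF m, of x "s - x"] in simp)
  moreover have "?num' * ?den - ?num * ?den' = 0"
    using rel by algebra
  ultimately show ?thesis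
    by simp
qed

lemma jsn_add:
  assumes m: "m\<^sup>2 < 1"
  shows "jsn m (u + v) = (jsn m u * jcn m v * jdn m v + jsn m v * jcn m u * jdn m u)
    / (1 - m\<^sup>2 * (jsn m u)\<^sup>2 * (jsn m v)\<^sup>2)"
  using DERIV_isconst_all[OF allI[OF jsn_addition_invariant[OF m, of "u + v"]], of u 0] m
  by simp

lemma jcn_add:
  assumes m: "m\<^sup>2 < 1"
  shows "jcn m (u + v) = (jcn m u * jcn m v - jsn m u * jsn m v * jdn m u * jdn m v)
    / (1 - m\<^sup>2 * (jsn m u)\<^sup>2 * (jsn m v)\<^sup>2)"
  using DERIV_isconst_all[OF allI[OF jcn_addition_invariant[OF m, of "u + v"]], of u 0] m
  by simp

lemma jam_bounds:
  assumes m: "m\<^sup>2 < 1" and "0 < u" "u < ellK m"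
  shows "0 < jam m u" and "jam m u < pi / 2"
  using jam_less_iff[OF m, of 0 u] jam_less_iff[OF m, of u "ellK m"] assms
  by (simp_all add: jam_ellK)

section \<open>Lines and conics\<close>

definition cross :: "complex \<Rightarrow> complex \<Rightarrow> real" where
  "cross z w = Re z * Im w - Im z * Re w"

lemma cross_self [simp]: "cross z z = 0"
  by (simp add: cross_def)

lemma cross_commute: "cross z w = - cross w z"
  by (simp add: cross_def)

lemma cross_diff_diff: "cross (z - x) (w - x) = cross z w + cross x z + cross w x"
  by (simp add: cross_def algebra_simps)

lemma cross_of_real_mult_left [simp]: "cross (of_real t * w) w = 0"
  by (simp add: cross_def)

lemma cross_eq_0_imp_real_multiple:
  assumes "w \<noteq> 0" and "cross z w = 0"
  obtains t where "z = of_real t * w"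
proof
  have "Im (z / w) = 0"
    using assms(2) by (simp add: Im_divide cross_def algebra_simps)
  then have "z / w = of_real (Re (z / w))"
    by (simp add: complex_eq_iff)
  then show "z = of_real (Re (z / w)) * w"
    using assms(1) by (simp add: field_simps)
qed

lemma cross_eq_0_if_orthogonal:
  assumes "n1 * Re z + n2 * Im z = 0" and "n1 * Re w + n2 * Im w = 0" and "n1 \<noteq> 0 \<or> n2 \<noteq> 0"
  shows "cross z w = 0"
proof -
  have "n1 * cross z w = 0" and "n2 * cross z w = 0"
    using assms(1,2) unfolding cross_def by algebra+
  then show ?thesis
    using assms(3) by auto
qed

lemma line_through_iff: "z \<in> line_through p q \<longleftrightarrow> (\<exists>t. z = p + of_real t * (q - p))"
  by (auto simp: line_through_def)

lemma line_through_commute: "line_through p q = line_through q p"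
proof -
  have "z \<in> line_through q p" if z: "z \<in> line_through p q" for z p q
  proof -
    obtain t where "z = p + of_real t * (q - p)"
      using z by (auto simp: line_through_iff)
    then have "z = q + of_real (1 - t) * (p - q)"
      by (simp add: algebra_simps)
    then show ?thesis
      unfolding line_through_iff by blast
  qed
  then show ?thesis
    by blast
qed

lemma mem_ellipse_iff: "z \<in> ellipse a b \<longleftrightarrow> (Re z / a)\<^sup>2 + (Im z / b)\<^sup>2 = 1"
  by (simp add: ellipse_def)

lemma ellipse_form_pos:
  fixes a b :: real
  assumes "a > 0" "b > 0" "v \<noteq> 0"
  shows "0 < (Re v)\<^sup>2 / a\<^sup>2 + (Im v)\<^sup>2 / b\<^sup>2"
proof -
  have "Re v \<noteq> 0 \<or> Im v \<noteq> 0"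
    using assms(3) by (simp add: complex_eq_iff)
  then show ?thesis
    using assms(1,2) by (auto intro: add_pos_nonneg add_nonneg_pos)
qed

lemma mem_ellipse_line_iff:
  fixes a b t :: real
  assumes "a > 0" "b > 0"
  shows "X + of_real t * v \<in> ellipse a b \<longleftrightarrow>
    ((Re v)\<^sup>2 / a\<^sup>2 + (Im v)\<^sup>2 / b\<^sup>2) * t\<^sup>2 + 2 * (Re X * Re v / a\<^sup>2 + Im X * Im v / b\<^sup>2) * t
      + ((Re X)\<^sup>2 / a\<^sup>2 + (Im X)\<^sup>2 / b\<^sup>2 - 1) = 0"
proof -
  have "((Re X + t * Re v) / a)\<^sup>2 + ((Im X + t * Im v) / b)\<^sup>2 - 1 =
    ((Re v)\<^sup>2 / a\<^sup>2 + (Im v)\<^sup>2 / b\<^sup>2) * t\<^sup>2 + 2 * (Re X * Re v / a\<^sup>2 + Im X * Im v / b\<^sup>2) * t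
      + ((Re X)\<^sup>2 / a\<^sup>2 + (Im X)\<^sup>2 / b\<^sup>2 - 1)"
    using assms by (simp add: power_divide power2_sum power_mult_distrib add_divide_distrib
      algebra_simps power2_eq_square)
  moreover have "Re (X + of_real t * v) = Re X + t * Re v" "Im (X + of_real t * v) = Im X + t * Im v"
    by simp_all
  ultimately show ?thesis
    unfolding mem_ellipse_iff by (simp only: eq_iff_diff_eq_0[of _ 1])
qed

lemma tangent_to_imp_discriminant_eq_0:
  fixes a b :: real
  assumes a: "a > 0" and b: "b > 0" and "X \<noteq> Y" and tangent: "tangent_to (line_through X Y) a b"
  defines "A \<equiv> (Re (Y - X))\<^sup>2 / a\<^sup>2 + (Im (Y - X))\<^sup>2 / b\<^sup>2"
    and "B \<equiv> Re X * Re (Y - X) / a\<^sup>2 + Im X * Im (Y - X) / b\<^sup>2"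
    and "C \<equiv> (Re X)\<^sup>2 / a\<^sup>2 + (Im X)\<^sup>2 / b\<^sup>2 - 1"
  shows "B\<^sup>2 = A * C"
proof -
  define z where "z t = X + of_real t * (Y - X)" for t :: real
  have z_line: "z t \<in> line_through X Y" for t
    unfolding z_def line_through_iff by blast
  have z_ellipse: "z t \<in> ellipse a b \<longleftrightarrow> A * t\<^sup>2 + 2 * B * t + C = 0" for t
    unfolding z_def A_def B_def C_def by (rule mem_ellipse_line_iff[OF a b])
  have A: "A > 0"
    unfolding A_def using ellipse_form_pos[OF a b, of "Y - X"] \<open>X \<noteq> Y\<close> by simp
  have square: "A * (A * t\<^sup>2 + 2 * B * t + C) = (A * t + B)\<^sup>2 - (B\<^sup>2 - A * C)" for t
    by (simp add: power2_eq_square algebra_simps)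
  obtain t0 where "z t0 \<in> ellipse a b"
    using tangent unfolding tangent_to_def line_through_iff z_def by blast
  then have "(A * t0 + B)\<^sup>2 = B\<^sup>2 - A * C"
    using square[of t0] z_ellipse by simp
  then have "A * C \<le> B\<^sup>2"
    by (metis diff_ge_0_iff_ge zero_le_power2)
  moreover have "\<not> A * C < B\<^sup>2"
  proof
    assume "A * C < B\<^sup>2"
    define r where "r = sqrt (B\<^sup>2 - A * C)"
    have "r > 0" "r\<^sup>2 = B\<^sup>2 - A * C"
      using \<open>A * C < B\<^sup>2\<close> by (simp_all add: r_def)
    have "z t \<in> ellipse a b" if "A * t + B = r \<or> A * t + B = - r" for t
    proof -
      have "A * (A * t\<^sup>2 + 2 * B * t + C) = 0"
        using square[of t] that \<open>r\<^sup>2 = B\<^sup>2 - A * C\<close> by auto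
      then show ?thesis
        using z_ellipse A by simp
    qed
    then have "z ((- B + r) / A) \<in> ellipse a b" "z ((- B - r) / A) \<in> ellipse a b"
      using A by simp_all
    moreover have "z ((- B + r) / A) \<noteq> z ((- B - r) / A)"
      using \<open>r > 0\<close> A \<open>X \<noteq> Y\<close> by (simp add: z_def divide_simps)
    ultimately show False
      using tangent z_line unfolding tangent_to_def by blast
  qed
  ultimately show ?thesis
    by linarith
qed

text \<open>The line n1 x + n2 y = h touches the ellipse at the point (a^2 n1 / h, b^2 n2 / h).\<close>
lemma tangent_toI:
  fixes a b h n1 n2 :: real
  assumes a: "a > 0" and b: "b > 0" and h: "h \<noteq> 0"
    and hh: "h\<^sup>2 = a\<^sup>2 * n1\<^sup>2 + b\<^sup>2 * n2\<^sup>2" and "P \<noteq> Q"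
    and P: "n1 * Re P + n2 * Im P = h" and Q: "n1 * Re Q + n2 * Im Q = h"
  shows "tangent_to (line_through P Q) a b"
proof -
  define T where "T = Complex (a\<^sup>2 * n1 / h) (b\<^sup>2 * n2 / h)"
  have on_line: "n1 * Re z + n2 * Im z = h" if z_line: "z \<in> line_through P Q" for z
  proof -
    obtain t where z: "z = P + of_real t * (Q - P)"
      using z_line by (auto simp: line_through_iff)
    have "n1 * Re z + n2 * Im z
        = (n1 * Re P + n2 * Im P) + t * ((n1 * Re Q + n2 * Im Q) - (n1 * Re P + n2 * Im P))"
      unfolding z by (simp add: algebra_simps)
    then show ?thesis
      using P Q by simp
  qed
  have "n1 * Re T + n2 * Im T = (a\<^sup>2 * n1\<^sup>2 + b\<^sup>2 * n2\<^sup>2) / h"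
    by (simp add: T_def power2_eq_square add_divide_distrib mult_ac)
  also have "\<dots> = h\<^sup>2 / h"
    by (simp only: hh)
  also have "\<dots> = h"
    using h by (simp add: power2_eq_square)
  finally have T: "n1 * Re T + n2 * Im T = h" .
  have "(Re T / a)\<^sup>2 + (Im T / b)\<^sup>2 = (a\<^sup>2 * n1\<^sup>2 + b\<^sup>2 * n2\<^sup>2) / h\<^sup>2"
    using a b by (simp add: T_def power2_eq_square field_simps) (simp add: add_divide_distrib)
  then have "T \<in> ellipse a b"
    using h by (simp add: mem_ellipse_iff hh[symmetric])
  moreover have "T \<in> line_through P Q"
  proof -
    have "Q - P \<noteq> 0"
      using \<open>P \<noteq> Q\<close> by simp
    moreover have "cross (T - P) (Q - P) = 0"
      by (rule cross_eq_0_if_orthogonal[of n1 _ n2]) (use P Q T h in \<open>auto simp: algebra_simps\<close>)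
    ultimately obtain t where "T - P = of_real t * (Q - P)"
      by (rule cross_eq_0_imp_real_multiple)
    then show ?thesis
      unfolding line_through_iff by (auto simp: algebra_simps)
  qed
  moreover have "z = T" if "z \<in> line_through P Q" "z \<in> ellipse a b" for z
  proof -
    have "(Re z / a - a * n1 / h)\<^sup>2 + (Im z / b - b * n2 / h)\<^sup>2
        = ((Re z / a)\<^sup>2 + (Im z / b)\<^sup>2) - 2 * (n1 * Re z + n2 * Im z) / h
          + (a\<^sup>2 * n1\<^sup>2 + b\<^sup>2 * n2\<^sup>2) / h\<^sup>2"
      using a b h by (simp add: field_simps power2_eq_square)
    also have "\<dots> = 0"
      using that on_line h by (simp add: mem_ellipse_iff hh[symmetric])
    finally have "Re z / a = a * n1 / h" "Im z / b = b * n2 / h"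
      by (simp_all add: sum_power2_eq_zero_iff)
    then show ?thesis
      using a b by (simp add: complex_eq_iff T_def field_simps power2_eq_square)
  qed
  ultimately show ?thesis
    unfolding tangent_to_def by blast
qed

lemma quadratic_form_isotropic_parallel:
  fixes p q r a1 a2 b1 b2 w1 w2 v1 v2 :: real
  assumes "p * a1\<^sup>2 + q * a1 * a2 + r * a2\<^sup>2 = 0"
    and "p * b1\<^sup>2 + q * b1 * b2 + r * b2\<^sup>2 = 0"
    and "p * w1\<^sup>2 + q * w1 * w2 + r * w2\<^sup>2 \<noteq> 0"
    and "a1 * b2 - a2 * b1 \<noteq> 0"
    and "p * v1\<^sup>2 + q * v1 * v2 + r * v2\<^sup>2 = 0"
  shows "v1 * a2 - v2 * a1 = 0 \<or> v1 * b2 - v2 * b1 = 0"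
proof -
  define k where "k = a1 * b2 - a2 * b1"
  define polar where "polar = 2 * p * a1 * b1 + q * (a1 * b2 + a2 * b1) + 2 * r * a2 * b2"
  have expand: "k\<^sup>2 * (p * x1\<^sup>2 + q * x1 * x2 + r * x2\<^sup>2)
      = (x1 * b2 - x2 * b1)\<^sup>2 * (p * a1\<^sup>2 + q * a1 * a2 + r * a2\<^sup>2)
        + (a1 * x2 - a2 * x1)\<^sup>2 * (p * b1\<^sup>2 + q * b1 * b2 + r * b2\<^sup>2)
        + (x1 * b2 - x2 * b1) * (a1 * x2 - a2 * x1) * polar" for x1 x2
    unfolding k_def polar_def by algebra
  have "polar \<noteq> 0"
    using expand[of w1 w2] assms(1-4) by (auto simp: k_def)
  moreover have "(v1 * b2 - v2 * b1) * (a1 * v2 - a2 * v1) * polar = 0"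
    using expand[of v1 v2] assms(1,2,5) by simp
  ultimately have "v1 * b2 - v2 * b1 = 0 \<or> a1 * v2 - a2 * v1 = 0"
    by simp
  then show ?thesis
    by (auto simp: algebra_simps)
qed

lemma ellipse_collinear_eq:
  fixes a b :: real
  assumes a: "a > 0" and b: "b > 0"
    and X: "X \<in> ellipse a b" and Y: "Y \<in> ellipse a b" and Z: "Z \<in> ellipse a b"
    and "Y \<noteq> X" and "Z \<noteq> X" and collinear: "cross (Y - X) (Z - X) = 0"
  shows "Y = Z"
proof -
  obtain t where "Y - X = of_real t * (Z - X)"
    using cross_eq_0_imp_real_multiple[OF _ collinear] \<open>Z \<noteq> X\<close> by auto
  then have t: "Y = X + of_real t * (Z - X)"
    by (simp add: algebra_simps)
  let ?A = "(Re (Z - X))\<^sup>2 / a\<^sup>2 + (Im (Z - X))\<^sup>2 / b\<^sup>2"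
  let ?B = "Re X * Re (Z - X) / a\<^sup>2 + Im X * Im (Z - X) / b\<^sup>2"
  have root: "?A * s\<^sup>2 + 2 * ?B * s = 0" if "X + of_real s * (Z - X) \<in> ellipse a b" for s
    using that X mem_ellipse_line_iff[OF a b, of X s "Z - X"]
    by (simp add: mem_ellipse_iff power_divide)
  have "?A + 2 * ?B = 0" "?A * t\<^sup>2 + 2 * ?B * t = 0"
    using root[of 1] root[of t] Z Y t by simp_all
  then have "?A * (t * (t - 1)) = 0"
    by algebra
  moreover have "?A > 0"
    using ellipse_form_pos[OF a b, of "Z - X"] \<open>Z \<noteq> X\<close> by simp
  ultimately have "t = 0 \<or> t = 1"
    by simp
  then show ?thesis
    using t \<open>Y \<noteq> X\<close> by auto
qed

text \<open>The directions of the tangents through X are the isotropic vectors of the discriminant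
  form p v1^2 + q v1 v2 + r v2^2 below, which is positive at X itself.\<close>
lemma tangent_from_point_cases:
  fixes a b ae be :: real
  assumes a: "a > 0" and b: "b > 0" and ae: "ae > 0" and be: "be > 0"
    and X: "X \<in> ellipse ae be" and Y1: "Y1 \<in> ellipse ae be" and Y2: "Y2 \<in> ellipse ae be"
    and Y: "Y \<in> ellipse ae be" and "X \<noteq> 0"
    and "Y1 \<noteq> X" and "Y2 \<noteq> X" and "Y \<noteq> X"
    and tangent1: "tangent_to (line_through X Y1) a b"
    and tangent2: "tangent_to (line_through X Y2) a b"
    and tangent: "tangent_to (line_through X Y) a b"
    and independent: "cross (Y1 - X) (Y2 - X) \<noteq> 0"
  shows "Y = Y1 \<or> Y = Y2"
proof -
  define ia ib where "ia = 1 / a\<^sup>2" and "ib = 1 / b\<^sup>2"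
  define C where "C = (Re X)\<^sup>2 * ia + (Im X)\<^sup>2 * ib - 1"
  define p q r where "p = (Re X)\<^sup>2 * ia\<^sup>2 - C * ia" and "q = 2 * Re X * Im X * ia * ib"
    and "r = (Im X)\<^sup>2 * ib\<^sup>2 - C * ib"
  have form: "p * v1\<^sup>2 + q * v1 * v2 + r * v2\<^sup>2
      = (Re X * v1 * ia + Im X * v2 * ib)\<^sup>2 - (v1\<^sup>2 * ia + v2\<^sup>2 * ib) * C" for v1 v2
    unfolding p_def q_def r_def by algebra
  have isotropic: "p * (Re (Z - X))\<^sup>2 + q * Re (Z - X) * Im (Z - X) + r * (Im (Z - X))\<^sup>2 = 0"
    if "Z \<noteq> X" "tangent_to (line_through X Z) a b" for Z
    using tangent_to_imp_discriminant_eq_0[OF a b that(1)[symmetric] that(2)]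
    unfolding form by (simp add: ia_def ib_def C_def)
  have "p * (Re X)\<^sup>2 + q * Re X * Im X + r * (Im X)\<^sup>2 = (Re X)\<^sup>2 * ia + (Im X)\<^sup>2 * ib"
    unfolding form C_def by algebra
  then have "p * (Re X)\<^sup>2 + q * Re X * Im X + r * (Im X)\<^sup>2 \<noteq> 0"
    using ellipse_form_pos[OF a b \<open>X \<noteq> 0\<close>] by (simp add: ia_def ib_def)
  then have "cross (Y - X) (Y1 - X) = 0 \<or> cross (Y - X) (Y2 - X) = 0"
    using quadratic_form_isotropic_parallel[OF isotropic[OF \<open>Y1 \<noteq> X\<close> tangent1]
      isotropic[OF \<open>Y2 \<noteq> X\<close> tangent2] _ _ isotropic[OF \<open>Y \<noteq> X\<close> tangent]] independent
    by (simp add: cross_def)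
  then show ?thesis
    using ellipse_collinear_eq[OF ae be X Y Y1 \<open>Y \<noteq> X\<close> \<open>Y1 \<noteq> X\<close>]
      ellipse_collinear_eq[OF ae be X Y Y2 \<open>Y \<noteq> X\<close> \<open>Y2 \<noteq> X\<close>] by blast
qed

section \<open>Billiards with a confocal caustic\<close>

lemma bparam_surj:
  assumes ae: "ae > 0" and be: "be > 0" and m: "m\<^sup>2 < 1" and z: "z \<in> ellipse ae be"
  obtains u where "z = bparam ae be m u"
proof -
  have "(Im z / be)\<^sup>2 + (- Re z / ae)\<^sup>2 = 1"
    using z by (simp add: mem_ellipse_iff add.commute)
  then obtain t where t: "Im z / be = cos t" "- Re z / ae = sin t"
    by (rule sincos_total_2pi)
  have "bparam ae be m (ellF m t) = z"
    using t ae be by (simp add: bparam_def jsn_def jcn_def jam_ellF[OF m] complex_eq_iff field_simps)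
  then show ?thesis
    using that by blast
qed

lemma sin_add_lt_sin_plus_sin:
  fixes a b :: real
  assumes "0 < a" "a < pi" "0 < b" "b < pi"
  shows "sin (a + b) < sin a + sin b"
proof -
  have "sin a > 0" "sin b > 0" "cos a < 1" "cos b < 1"
    using assms sin_gt_zero cos_monotone_0_pi[of 0 a] cos_monotone_0_pi[of 0 b] by auto
  then have "0 < sin a * (1 - cos b) + sin b * (1 - cos a)"
    by (intro add_pos_pos mult_pos_pos) auto
  then show ?thesis
    by (simp add: sin_add algebra_simps)
qed

text \<open>The line equation of chord_endpoints_on_line below at the parameter u + D (u - D: replace
  s' by - s'), with sn and cn expanded by the addition theorems.\<close>
lemma chord_normal_identity:
  fixes ae be s c dd s' c' d' m den :: real
  assumes "c\<^sup>2 = 1 - s\<^sup>2" "d'\<^sup>2 = 1 - m\<^sup>2 * s'\<^sup>2" "den = 1 - m\<^sup>2 * s\<^sup>2 * s'\<^sup>2" "den \<noteq> 0"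
  shows "be * s * d' * (- ae * ((s * c' * d' + s' * c * dd) / den))
    + (- ae * c) * (be * ((c * c' - s * s' * dd * d') / den)) = - ae * be * c'"
proof -
  have "be * s * d' * (- ae * (s * c' * d' + s' * c * dd))
      + (- ae * c) * (be * (c * c' - s * s' * dd * d')) = - ae * be * c' * den"
    using assms(1-3) by algebra
  then show ?thesis
    using assms(4) by (simp add: field_simps)
qed

lemma modulus_sq_less_1:
  fixes ac bc m :: real
  assumes "ac > 0" "bc > 0" "m\<^sup>2 * ac\<^sup>2 = ac\<^sup>2 - bc\<^sup>2"
  shows "m\<^sup>2 < 1"
proof -
  have "m\<^sup>2 * ac\<^sup>2 < 1 * ac\<^sup>2"
    using assms(2,3) by simp
  then show ?thesis
    using assms(1) by (simp add: mult_less_cancel_right)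
qed

locale confocal_billiard =
  fixes ac bc ae be m D :: real
  assumes ac: "ac > 0" and bc: "bc > 0"
    and exterior: "confocal_exterior ae be ac bc"
    and modulus: "m\<^sup>2 * ac\<^sup>2 = ac\<^sup>2 - bc\<^sup>2"
    and D: "0 < D" "D < ellK m"
    and bc_eq: "bc = be * jcn m D"
begin

lemma ae: "ae > 0" and be: "be > 0" and confocal: "ae\<^sup>2 - be\<^sup>2 = ac\<^sup>2 - bc\<^sup>2"
  using exterior by (auto simp: confocal_exterior_def)

lemma m: "m\<^sup>2 < 1"
  using modulus_sq_less_1[OF ac bc modulus] .

definition point :: "real \<Rightarrow> complex" where
  "point \<phi> = Complex (- ae * sin \<phi>) (be * cos \<phi>)"

lemma bparam_eq_point: "bparam ae be m u = point (jam m u)"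
  by (simp add: bparam_def point_def jsn_def jcn_def)

lemma point_in_ellipse: "point \<phi> \<in> ellipse ae be"
  using ae be by (simp add: mem_ellipse_iff point_def power_mult_distrib)

lemma point_nonzero: "point \<phi> \<noteq> 0"
proof
  assume "point \<phi> = 0"
  then have "sin \<phi> = 0" "cos \<phi> = 0"
    using ae be by (auto simp: point_def complex_eq_iff)
  then show False
    using sin_cos_squared_add[of \<phi>] by simp
qed

lemma cross_point: "cross (point \<alpha>) (point \<beta>) = ae * be * sin (\<beta> - \<alpha>)"
  by (simp add: cross_def point_def sin_diff algebra_simps)

lemma jam_step_bounds: "0 < jam m (u + 2 * D) - jam m u" "jam m (u + 2 * D) - jam m u < pi"
proof -
  show "0 < jam m (u + 2 * D) - jam m u"
    using jam_less_iff[OF m, of u "u + 2 * D"] D by simp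
  have "jam m (u + 2 * D) < jam m (u + 2 * ellK m)"
    using jam_less_iff[OF m] D by simp
  then show "jam m (u + 2 * D) - jam m u < pi"
    using jam_add_2K[OF m, of u] by simp
qed

lemma cross_point_step_pos: "0 < cross (point (jam m u)) (point (jam m (u + 2 * D)))"
  unfolding cross_point using jam_step_bounds[of u] ae be by (intro mult_pos_pos sin_gt_zero) auto

lemma cross_point_step_back_neg: "cross (point (jam m u)) (point (jam m (u - 2 * D))) < 0"
  using cross_point_step_pos[of "u - 2 * D"] cross_commute[of "point (jam m u)"] by simp

lemma chord_endpoints_on_line:
  "be * jsn m u * jdn m D * Re (point (jam m (u - D))) - ae * jcn m u * Im (point (jam m (u - D)))
    = - ae * be * jcn m D"
  "be * jsn m u * jdn m D * Re (point (jam m (u + D))) - ae * jcn m u * Im (point (jam m (u + D)))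
    = - ae * be * jcn m D"
proof -
  define s c dd where "s = jsn m u" and "c = jcn m u" and "dd = jdn m u"
  define s' c' d' where "s' = jsn m D" and "c' = jcn m D" and "d' = jdn m D"
  define den where "den = 1 - m\<^sup>2 * s\<^sup>2 * s'\<^sup>2"
  have den: "den \<noteq> 0"
    using jacobi_denominator_pos[OF m, of u D] by (simp add: den_def s_def s'_def)
  have c: "c\<^sup>2 = 1 - s\<^sup>2" and d': "d'\<^sup>2 = 1 - m\<^sup>2 * s'\<^sup>2"
    using jsn_sq_add_jcn_sq[of m u] jdn_sq[OF m, of D] by (simp_all add: s_def c_def d'_def s'_def)
  have add: "jsn m (u + D) = (s * c' * d' + s' * c * dd) / den"
    "jcn m (u + D) = (c * c' - s * s' * dd * d') / den"
    using jsn_add[OF m, of u D] jcn_add[OF m, of u D]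
    by (simp_all add: s_def c_def dd_def s'_def c'_def d'_def den_def)
  have diff: "jsn m (u - D) = (s * c' * d' + (- s') * c * dd) / den"
    "jcn m (u - D) = (c * c' - s * (- s') * dd * d') / den"
    using jsn_add[OF m, of u "- D"] jcn_add[OF m, of u "- D"]
    by (simp_all add: s_def c_def dd_def s'_def c'_def d'_def den_def jsn_minus[OF m]
      jcn_minus[OF m] jdn_minus[OF m])
  have "d'\<^sup>2 = 1 - m\<^sup>2 * (- s')\<^sup>2" "den = 1 - m\<^sup>2 * s\<^sup>2 * (- s')\<^sup>2"
    by (simp_all add: d' den_def)
  from chord_normal_identity[OF c this den]
  show "be * jsn m u * jdn m D * Re (point (jam m (u - D))) - ae * jcn m u * Im (point (jam m (u - D)))
    = - ae * be * jcn m D"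
    by (simp add: point_def diff s_def c_def s'_def c'_def d'_def jsn_def[symmetric]
      jcn_def[symmetric])
  from chord_normal_identity[OF c d' den_def den]
  show "be * jsn m u * jdn m D * Re (point (jam m (u + D))) - ae * jcn m u * Im (point (jam m (u + D)))
    = - ae * be * jcn m D"
    by (simp add: point_def add s_def c_def s'_def c'_def d'_def jsn_def[symmetric]
      jcn_def[symmetric])
qed

text \<open>The tangency condition for the line of chord_endpoints_on_line reduces to
  ac dn D = ae cn D, which is where confocality and bc = be cn D enter.\<close>
lemma tangent_chord: "tangent_to (line_through (point (jam m (u - D))) (point (jam m (u + D)))) ac bc"
proof (rule tangent_toI[OF ac bc])
  have "jcn m D > 0"
    using jam_bounds[OF m D] by (simp add: jcn_def cos_gt_zero)
  then show "- ae * be * jcn m D \<noteq> 0"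
    using ae be by simp
  have "ac\<^sup>2 * (jdn m D)\<^sup>2 = ae\<^sup>2 * (jcn m D)\<^sup>2"
    using jdn_sq[OF m, of D] modulus confocal jsn_sq_add_jcn_sq[of m D] bc_eq by algebra
  then show "(- ae * be * jcn m D)\<^sup>2
      = ac\<^sup>2 * (be * jsn m u * jdn m D)\<^sup>2 + bc\<^sup>2 * (- ae * jcn m u)\<^sup>2"
    using jsn_sq_add_jcn_sq[of m u] bc_eq by algebra
  show "point (jam m (u - D)) \<noteq> point (jam m (u + D))"
    using cross_point_step_pos[of "u - D"] by (auto simp: algebra_simps mult_2)
qed (use chord_endpoints_on_line in simp_all)

lemma tangent_step: "tangent_to (line_through (point (jam m u)) (point (jam m (u + 2 * D)))) ac bc"
  using tangent_chord[of "u + D"] by (simp add: algebra_simps mult_2)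

lemma tangent_step_back:
  "tangent_to (line_through (point (jam m u)) (point (jam m (u - 2 * D)))) ac bc"
  using tangent_chord[of "u - D"] by (simp add: algebra_simps mult_2 line_through_commute)

lemma cross_point_turn_pos:
  "0 < cross (point (jam m (u + 2 * D)) - point (jam m u)) (point (jam m (u - 2 * D)) - point (jam m u))"
proof -
  define \<alpha> \<beta> where "\<alpha> = jam m (u + 2 * D) - jam m u" and "\<beta> = jam m u - jam m (u - 2 * D)"
  have "0 < \<alpha>" "\<alpha> < pi" "0 < \<beta>" "\<beta> < pi"
    using jam_step_bounds[of u] jam_step_bounds[of "u - 2 * D"] by (simp_all add: \<alpha>_def \<beta>_def)
  then have "0 < ae * be * (sin \<alpha> + sin \<beta> - sin (\<alpha> + \<beta>))"
    using sin_add_lt_sin_plus_sin ae be by simp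
  also have "\<dots> = cross (point (jam m (u + 2 * D)) - point (jam m u))
      (point (jam m (u - 2 * D)) - point (jam m u))"
  proof -
    have "sin (jam m (u - 2 * D) - jam m (u + 2 * D)) = - sin (\<alpha> + \<beta>)"
      unfolding \<alpha>_def \<beta>_def by (simp flip: sin_minus)
    then show ?thesis
      unfolding cross_diff_diff cross_point \<alpha>_def[symmetric] \<beta>_def[symmetric]
      by (simp add: algebra_simps)
  qed
  finally show ?thesis .
qed

lemma next_vertex:
  assumes Y: "Y \<in> ellipse ae be" and "Y \<noteq> point (jam m u)"
    and tangent: "tangent_to (line_through (point (jam m u)) Y) ac bc"
  shows "0 < cross (point (jam m u)) Y \<Longrightarrow> Y = point (jam m (u + 2 * D))"
    and "cross (point (jam m u)) Y < 0 \<Longrightarrow> Y = point (jam m (u - 2 * D))"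
proof -
  have "point (jam m (u + 2 * D)) \<noteq> point (jam m u)" "point (jam m (u - 2 * D)) \<noteq> point (jam m u)"
    using cross_point_step_pos[of u] cross_point_step_back_neg[of u] by auto
  then have "Y = point (jam m (u + 2 * D)) \<or> Y = point (jam m (u - 2 * D))"
    using tangent_from_point_cases[OF ac bc ae be point_in_ellipse point_in_ellipse point_in_ellipse Y
        point_nonzero _ _ \<open>Y \<noteq> point (jam m u)\<close> tangent_step tangent_step_back tangent]
      cross_point_turn_pos[of u] by simp
  then show "0 < cross (point (jam m u)) Y \<Longrightarrow> Y = point (jam m (u + 2 * D))"
    and "cross (point (jam m u)) Y < 0 \<Longrightarrow> Y = point (jam m (u - 2 * D))"
    using cross_point_step_pos[of u] cross_point_step_back_neg[of u] by auto
qed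

lemma billiard_orbit: "billiard ae be ac bc (\<lambda>k. bparam ae be m (u0 + 2 * of_int k * D))"
proof -
  define P where "P k = point (jam m (u0 + 2 * of_int k * D))" for k :: int
  have succ: "u0 + 2 * of_int (i + 1) * D = (u0 + 2 * of_int i * D) + 2 * D"
    and pred: "u0 + 2 * of_int (i - 1) * D = (u0 + 2 * of_int i * D) - 2 * D" for i :: int
    by (simp_all add: algebra_simps)
  have cross_pos: "0 < cross (P i) (P (i + 1))" for i
    unfolding P_def succ by (rule cross_point_step_pos)
  have "line_through (P (i - 1)) (P i) \<noteq> line_through (P i) (P (i + 1))" for i
  proof
    assume same_line: "line_through (P (i - 1)) (P i) = line_through (P i) (P (i + 1))"
    have "P (i + 1) \<in> line_through (P i) (P (i + 1))"
      unfolding line_through_iff by (rule exI[of _ 1]) simp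
    then have "P (i + 1) \<in> line_through (P i) (P (i - 1))"
      by (simp only: same_line[symmetric] line_through_commute)
    then obtain t where "P (i + 1) - P i = of_real t * (P (i - 1) - P i)"
      unfolding line_through_iff by (auto simp: algebra_simps)
    then have "cross (P (i + 1) - P i) (P (i - 1) - P i) = 0"
      by simp
    moreover have "0 < cross (P (i + 1) - P i) (P (i - 1) - P i)"
      unfolding P_def succ pred by (rule cross_point_turn_pos)
    ultimately show False
      by simp
  qed
  moreover have "P i \<noteq> P (i + 1)" for i
    using cross_pos[of i] by auto
  moreover have "tangent_to (line_through (P i) (P (i + 1))) ac bc" for i
    unfolding P_def succ by (rule tangent_step)
  moreover have "P i \<in> ellipse ae be" for i
    unfolding P_def by (rule point_in_ellipse)
  ultimately show ?thesis
    using cross_pos unfolding billiard_def bparam_eq_point P_def[symmetric] cross_def by blast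
qed

lemma billiard_eq_orbit:
  assumes billiard: "billiard ae be ac bc P" and P0: "P 0 = bparam ae be m u0"
  shows "P k = bparam ae be m (u0 + 2 * of_int k * D)"
proof -
  have ellipse: "P i \<in> ellipse ae be" and distinct: "P i \<noteq> P (i + 1)"
    and tangent: "tangent_to (line_through (P i) (P (i + 1))) ac bc"
    and ccw: "0 < cross (P i) (P (i + 1))" for i
    using billiard unfolding billiard_def cross_def by blast+
  show ?thesis
  proof (induction k rule: int_induct[where k = 0])
    case base
    then show ?case
      using P0 by simp
  next
    case (step1 i)
    then have "P i = point (jam m (u0 + 2 * of_int i * D))"
      by (simp add: bparam_eq_point)
    then have "P (i + 1) = point (jam m ((u0 + 2 * of_int i * D) + 2 * D))"
      using next_vertex(1)[OF ellipse] distinct[of i] tangent[of i] ccw[of i] by auto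
    then show ?case
      by (simp add: bparam_eq_point algebra_simps)
  next
    case (step2 i)
    then have "P i = point (jam m (u0 + 2 * of_int i * D))"
      by (simp add: bparam_eq_point)
    moreover have "tangent_to (line_through (P i) (P (i - 1))) ac bc"
      using tangent[of "i - 1"] by (simp add: line_through_commute)
    moreover have "cross (P i) (P (i - 1)) < 0"
      using ccw[of "i - 1"] cross_commute[of "P i"] by simp
    ultimately have "P (i - 1) = point (jam m ((u0 + 2 * of_int i * D) - 2 * D))"
      using next_vertex(2)[OF ellipse] distinct[of "i - 1"] by auto
    then show ?case
      by (simp add: bparam_eq_point algebra_simps)
  qed
qed

end

lemma cis_eq_cis_imp_eq:
  fixes x y :: real
  assumes "cis x = cis y" and "\<bar>x - y\<bar> < 2 * pi"
  shows "x = y"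
proof -
  obtain n :: int where n: "x = y + 2 * pi * of_int n"
    using assms(1) sin_cos_eq_iff[of x y] by (auto simp: complex_eq_iff)
  then have "2 * pi * \<bar>of_int n\<bar> < 2 * pi * 1"
    using assms(2) by (simp add: abs_mult)
  then have "n = 0"
    using pi_gt_zero mult_less_cancel_left_pos[of "2 * pi" "\<bar>real_of_int n\<bar>" 1] by simp
  with n show ?thesis
    by simp
qed

context confocal_billiard
begin

lemma jam_orbit_period:
  assumes "real N * D = 2 * real \<tau> * ellK m"
  shows "jam m (u + 2 * real N * D) = jam m u + 2 * real \<tau> * pi"
proof -
  have period: "u + 2 * real N * D = u + 2 * ellK m * real (2 * \<tau>)"
    using assms by (simp add: algebra_simps)
  show ?thesis
    unfolding period jam_add_2K_mult[OF m] by simp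
qed

lemma point_add_2pi_mult: "point (\<phi> + 2 * real n * pi) = point \<phi>"
  by (simp add: point_def sin_add cos_add)

lemma periodic_billiard_orbit:
  assumes "real N * D = 2 * real \<tau> * ellK m"
  shows "periodic_billiard (\<lambda>k. bparam ae be m (u0 + 2 * of_int k * D)) N"
  unfolding periodic_billiard_def bparam_eq_point
proof
  fix i :: int
  have "u0 + 2 * of_int (i + int N) * D = (u0 + 2 * of_int i * D) + 2 * real N * D"
    by (simp add: algebra_simps)
  then show "point (jam m (u0 + 2 * of_int (i + int N) * D)) = point (jam m (u0 + 2 * of_int i * D))"
    by (simp only: jam_orbit_period[OF assms] point_add_2pi_mult)
qed

definition deviation :: "real \<Rightarrow> complex" where
  "deviation \<phi> = Complex (be * (cos \<phi>)\<^sup>2 + ae * (sin \<phi>)\<^sup>2) ((ae - be) * sin \<phi> * cos \<phi>)"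

text \<open>Since the factor deviation has positive real part, the argument of point \<phi> differs from
  \<phi> + pi/2 by less than pi/2; this keeps the turning angles of the edges free of jumps by 2 pi.\<close>
lemma point_eq_cis_deviation: "point \<phi> = \<i> * cis \<phi> * deviation \<phi>"
proof -
  have "(sin \<phi>)\<^sup>2 + (cos \<phi>)\<^sup>2 = 1"
    by simp
  then have "ae * sin \<phi> = ae * (cos \<phi> * (cos \<phi> * sin \<phi>)) + ae * (sin \<phi> * (sin \<phi> * sin \<phi>))"
    and "be * cos \<phi> = be * (cos \<phi> * (cos \<phi> * cos \<phi>)) + be * (cos \<phi> * (sin \<phi> * sin \<phi>))"
    by algebra+
  then show ?thesis
    by (simp add: complex_eq_iff point_def deviation_def cis.ctr algebra_simps power2_eq_square)
      (intro conjI; algebra)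
qed

lemma Re_deviation_pos: "0 < Re (deviation \<phi>)"
proof (cases "cos \<phi> = 0")
  case True
  then have "(sin \<phi>)\<^sup>2 = 1"
    using sin_cos_squared_add[of \<phi>] by simp
  then show ?thesis
    using ae True by (simp add: deviation_def)
next
  case False
  then show ?thesis
    using ae be by (simp add: deviation_def add_pos_nonneg)
qed

lemma deviation_add_2pi_mult: "deviation (\<phi> + 2 * real n * pi) = deviation \<phi>"
  by (simp add: deviation_def sin_add cos_add)

lemma Arg_point_step:
  fixes u :: real
  defines "\<phi>0 \<equiv> jam m u" and "\<phi>1 \<equiv> jam m (u + 2 * D)"
  shows "Arg (point \<phi>1 / point \<phi>0) = (\<phi>1 - \<phi>0) + Arg (deviation \<phi>1) - Arg (deviation \<phi>0)"
proof -
  define z where "z = point \<phi>1 / point \<phi>0"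
  have deviation_nonzero: "deviation \<phi> \<noteq> 0" for \<phi>
    using Re_deviation_pos[of \<phi>] by auto
  have "Im z = cross (point \<phi>0) (point \<phi>1) / (cmod (point \<phi>0))\<^sup>2"
    by (simp add: z_def Im_divide cross_def cmod_power2 algebra_simps)
  then have "0 < Im z"
    using cross_point_step_pos[of u] point_nonzero[of \<phi>0] by (simp add: \<phi>0_def \<phi>1_def)
  then have Arg_z: "0 < Arg z" "Arg z < pi" and "z \<noteq> 0"
    using Arg_lt_pi by auto
  have "cis (Arg z) = sgn z"
    using \<open>z \<noteq> 0\<close> by (rule cis_Arg)
  also have "\<dots> = cis (\<phi>1 - \<phi>0) * (sgn (deviation \<phi>1) / sgn (deviation \<phi>0))"
    unfolding z_def point_eq_cis_deviation
    by (simp add: sgn_mult sgn_divide cis_divide[symmetric] field_simps)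
  also have "\<dots> = cis (\<phi>1 - \<phi>0) * (cis (Arg (deviation \<phi>1)) / cis (Arg (deviation \<phi>0)))"
    using cis_Arg[OF deviation_nonzero] by simp
  also have "\<dots> = cis ((\<phi>1 - \<phi>0) + Arg (deviation \<phi>1) - Arg (deviation \<phi>0))"
    by (simp add: cis_divide cis_mult algebra_simps)
  finally have "cis (Arg z) = cis ((\<phi>1 - \<phi>0) + Arg (deviation \<phi>1) - Arg (deviation \<phi>0))" .
  moreover have "0 < \<phi>1 - \<phi>0" "\<phi>1 - \<phi>0 < pi"
    using jam_step_bounds[of u] by (simp_all add: \<phi>0_def \<phi>1_def)
  moreover have "\<bar>Arg (deviation \<phi>1)\<bar> < pi / 2" "\<bar>Arg (deviation \<phi>0)\<bar> < pi / 2"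
    using Arg_Re_pos Re_deviation_pos by blast+
  ultimately show ?thesis
    using Arg_z unfolding z_def by (intro cis_eq_cis_imp_eq) (auto simp: abs_less_iff)
qed

lemma turning_number_orbit:
  assumes period: "real N * D = 2 * real \<tau> * ellK m"
  shows "turning_number (\<lambda>k. bparam ae be m (u0 + 2 * of_int k * D)) N = real \<tau>"
proof -
  define f where "f i = Arg (bparam ae be m (u0 + 2 * of_int (i + 1) * D)
    / bparam ae be m (u0 + 2 * of_int i * D))" for i :: int
  define g where "g j = jam m (u0 + 2 * real j * D) + Arg (deviation (jam m (u0 + 2 * real j * D)))"
    for j :: nat
  have step: "f (int j) = g (Suc j) - g j" for j
    using Arg_point_step[of "u0 + 2 * real j * D"]
    by (simp add: f_def g_def bparam_eq_point algebra_simps)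
  have "{0..<int N} = int ` {0..<N}"
    by (simp add: image_int_atLeastLessThan)
  then have "(\<Sum>i\<in>{0..<int N}. f i) = (\<Sum>j<N. g (Suc j) - g j)"
    by (simp add: sum.reindex step atLeast0LessThan)
  also have "\<dots> = g N - g 0"
    by (rule sum_lessThan_telescope)
  also have "\<dots> = 2 * pi * real \<tau>"
    using jam_orbit_period[OF period, of u0] by (simp add: g_def deviation_add_2pi_mult)
  finally show ?thesis
    by (simp add: turning_number_def f_def)
qed

lemma periodic_billiard_turning_number:
  assumes period: "real N * D = 2 * real \<tau> * ellK m" and billiard: "billiard ae be ac bc P"
  shows "periodic_billiard P N" and "turning_number P N = real \<tau>"
proof -
  obtain u0 where "P 0 = bparam ae be m u0"
    using bparam_surj[OF ae be m] billiard unfolding billiard_def by blast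
  then have "P = (\<lambda>k. bparam ae be m (u0 + 2 * of_int k * D))"
    using billiard_eq_orbit[OF billiard] by blast
  then show "periodic_billiard P N" and "turning_number P N = real \<tau>"
    using periodic_billiard_orbit[OF period] turning_number_orbit[OF period] by simp_all
qed

end

lemma confocal_billiard_jacobi:
  assumes ac: "ac > 0" and bc: "bc > 0" and modulus: "m\<^sup>2 * ac\<^sup>2 = ac\<^sup>2 - bc\<^sup>2"
    and D: "0 < D" "D < ellK m"
  shows "confocal_billiard ac bc (ac * jdn m D / jcn m D) (bc / jcn m D) m D"
proof -
  have m: "m\<^sup>2 < 1"
    using modulus_sq_less_1[OF ac bc modulus] .
  define c where "c = jcn m D"
  have "0 < c" "c < 1"
    using jam_bounds[OF m D] cos_monotone_0_pi[of 0 "jam m D"]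
    by (simp_all add: c_def jcn_def cos_gt_zero)
  have "jdn m D > 0"
    by (rule jdn_pos[OF m])
  have "(jdn m D)\<^sup>2 = 1 - m\<^sup>2 * (1 - c\<^sup>2)"
    using jdn_sq[OF m, of D] jsn_sq_add_jcn_sq[of m D] by (simp add: c_def)
  then have "ac\<^sup>2 * (jdn m D)\<^sup>2 = ac\<^sup>2 * c\<^sup>2 + bc\<^sup>2 - bc\<^sup>2 * c\<^sup>2"
    using modulus by algebra
  then have "(ac * jdn m D / c)\<^sup>2 = ac\<^sup>2 + ((bc / c)\<^sup>2 - bc\<^sup>2)"
    using \<open>0 < c\<close> by (simp add: power_divide power_mult_distrib field_simps)
  moreover have "bc\<^sup>2 < (bc / c)\<^sup>2"
    using bc \<open>0 < c\<close> \<open>c < 1\<close> power_strict_mono[of c 1 2]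
    by (simp add: power_divide divide_simps)
  ultimately have "confocal_exterior (ac * jdn m D / c) (bc / c) ac bc"
    unfolding confocal_exterior_def using ac bc \<open>0 < c\<close> \<open>jdn m D > 0\<close> by auto
  then show ?thesis
    unfolding c_def using ac bc modulus D \<open>0 < c\<close> by unfold_locales (simp_all add: c_def)
qed

lemma periodic_confocal_billiard:
  fixes N \<tau> :: nat
  assumes ac: "0 < ac" and bc: "0 < bc" and modulus: "m\<^sup>2 * ac\<^sup>2 = ac\<^sup>2 - bc\<^sup>2"
    and "1 \<le> \<tau>" and "2 * \<tau> < N"
  defines "\<Delta> \<equiv> 2 * real \<tau> * ellK m / real N"
  shows "confocal_exterior (ac * jdn m \<Delta> / jcn m \<Delta>) (bc / jcn m \<Delta>) ac bc"
    and "billiard (ac * jdn m \<Delta> / jcn m \<Delta>) (bc / jcn m \<Delta>) ac bc P \<Longrightarrow> periodic_billiard P N"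
    and "billiard (ac * jdn m \<Delta> / jcn m \<Delta>) (bc / jcn m \<Delta>) ac bc P \<Longrightarrow>
      turning_number P N = real \<tau>"
proof -
  have K: "0 < ellK m"
    using ellK_pos[OF modulus_sq_less_1[OF ac bc modulus]] .
  have N: "0 < real N"
    using \<open>2 * \<tau> < N\<close> by simp
  have "2 * real \<tau> * ellK m < real N * ellK m"
    using \<open>2 * \<tau> < N\<close> K by simp
  then have "0 < \<Delta>" "\<Delta> < ellK m" and period: "real N * \<Delta> = 2 * real \<tau> * ellK m"
    using \<open>1 \<le> \<tau>\<close> K N by (simp_all add: \<Delta>_def divide_less_eq mult.commute)
  then interpret confocal_billiard ac bc "ac * jdn m \<Delta> / jcn m \<Delta>" "bc / jcn m \<Delta>" m \<Delta>
    by (intro confocal_billiard_jacobi[OF ac bc modulus])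
  show "confocal_exterior (ac * jdn m \<Delta> / jcn m \<Delta>) (bc / jcn m \<Delta>) ac bc"
    by (rule exterior)
  show "billiard (ac * jdn m \<Delta> / jcn m \<Delta>) (bc / jcn m \<Delta>) ac bc P \<Longrightarrow> periodic_billiard P N"
    by (rule periodic_billiard_turning_number(1)[OF period])
  show "billiard (ac * jdn m \<Delta> / jcn m \<Delta>) (bc / jcn m \<Delta>) ac bc P \<Longrightarrow>
      turning_number P N = real \<tau>"
    by (rule periodic_billiard_turning_number(2)[OF period])
qed

theorem theorem2:
  fixes ac bc :: real
  assumes "ac > bc" and "bc > 0"
  defines "d \<equiv> sqrt (ac\<^sup>2 - bc\<^sup>2)"
  defines "m \<equiv> d / ac"
  shows
    "(\<forall>ae be. confocal_exterior ae be ac bc \<longrightarrow>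
        (\<forall>\<Delta>. 0 < \<Delta> \<and> \<Delta> < ellK m \<and> bc = be * jcn m \<Delta> \<longrightarrow>
          (\<forall>u0. billiard ae be ac bc (\<lambda>k. bparam ae be m (u0 + 2 * of_int k * \<Delta>)) \<and>
                (\<forall>P. billiard ae be ac bc P \<and> P 0 = bparam ae be m u0 \<longrightarrow>
                      (\<forall>k. P k = bparam ae be m (u0 + 2 * of_int k * \<Delta>))))))
     \<and>
     (\<forall>N \<tau> :: nat. 3 \<le> N \<and> 1 \<le> \<tau> \<and> coprime N \<tau> \<and> 2 * \<tau> < N \<longrightarrow>
        (let \<Delta> = 2 * real \<tau> * ellK m / real N;
             ae = ac * jdn m \<Delta> / jcn m \<Delta>;
             be = bc / jcn m \<Delta>
         in confocal_exterior ae be ac bc \<and>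
            (\<forall>P. billiard ae be ac bc P \<longrightarrow>
                 periodic_billiard P N \<and> turning_number P N = real \<tau>)))"
proof -
  have ac: "0 < ac" and bc: "0 < bc"
    using assms(1,2) by linarith+
  have "bc\<^sup>2 < ac\<^sup>2"
    using assms(1,2) by (simp add: power_strict_mono)
  then have modulus: "m\<^sup>2 * ac\<^sup>2 = ac\<^sup>2 - bc\<^sup>2"
    using ac by (simp add: m_def d_def power_divide)
  show ?thesis
    unfolding Let_def
  proof (intro conjI allI impI)
    fix ae be \<Delta> u0
    assume "confocal_exterior ae be ac bc" and "0 < \<Delta> \<and> \<Delta> < ellK m \<and> bc = be * jcn m \<Delta>"
    then interpret confocal_billiard ac bc ae be m \<Delta>
      using ac bc modulus by unfold_locales auto
    show "billiard ae be ac bc (\<lambda>k. bparam ae be m (u0 + 2 * of_int k * \<Delta>))"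
      by (rule billiard_orbit)
    fix P k
    assume "billiard ae be ac bc P \<and> P 0 = bparam ae be m u0"
    then show "P k = bparam ae be m (u0 + 2 * of_int k * \<Delta>)"
      using billiard_eq_orbit by blast
  qed (use periodic_confocal_billiard[OF ac bc modulus] in auto)+
qed

end
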